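(* Let $k\ge 3$ be an integer and let $0<r\le \log k/k$ (natural logarithm). Define, for $\mu\in[0,1]$, \[ G(\mu)=k^{1-k}(k-1-\mu)^{k-2}\bigl(k(1-\mu+\mu^2)-1\bigr), \] \[ t(\mu)=\Bigl(\tfrac{1-\mu}{k}\Bigr)^{\frac{1-\mu}{k}}\Bigl(\tfrac{\mu}{k}\Bigr)^{\frac{2\mu}{k}}\Bigl(1-\tfrac{1}{k}-\tfrac{\mu}{k}\Bigr)^{1-\frac1k-\frac{\mu}{k}} \] (with the convention $0^0=1$), and $\Gamma_r(\mu)=G(\mu)^r/t(\mu)$. Let $g(\delta)=k\delta(1-\delta)^{k-1}$ and \[ \gamma_r=\frac{g(1/k)^r}{(1/k)^{1/k}(1-1/k)^{1-1/k}} . \] Then for every $\mu\in[0,1]$, $\Gamma_r(\mu)\le \gamma_r^2$. *)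

theory Defs
  imports Complex_Main
begin

definition pw :: "real \<Rightarrow> real \<Rightarrow> real" where
  "pw x y = (if y = 0 then 1 else x powr y)"

definition Gfun :: "nat \<Rightarrow> real \<Rightarrow> real" where
  "Gfun k \<mu> = real k powr (1 - real k) * (real k - 1 - \<mu>) ^ (k - 2)
              * (real k * (1 - \<mu> + \<mu>^2) - 1)"

definition tfun :: "nat \<Rightarrow> real \<Rightarrow> real" where
  "tfun k \<mu> = pw ((1 - \<mu>) / real k) ((1 - \<mu>) / real k)
             * pw (\<mu> / real k) (2 * \<mu> / real k)
             * pw (1 - 1 / real k - \<mu> / real k) (1 - 1 / real k - \<mu> / real k)"

definition Gamma_r :: "nat \<Rightarrow> real \<Rightarrow> real \<Rightarrow> real" where
  "Gamma_r k r \<mu> = Gfun k \<mu> powr r / tfun k \<mu>"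

definition gfun :: "nat \<Rightarrow> real \<Rightarrow> real" where
  "gfun k \<delta> = real k * \<delta> * (1 - \<delta>) ^ (k - 1)"

definition gamma_r :: "nat \<Rightarrow> real \<Rightarrow> real" where
  "gamma_r k r = gfun k (1 / real k) powr r
     / ((1 / real k) powr (1 / real k) * (1 - 1 / real k) powr (1 - 1 / real k))"

end

theory Submission
  imports Defs "HOL-Analysis.Harmonic_Numbers"
begin

text \<open>
  Write \<open>K = k\<close>, \<open>s = K - 1 - K\<mu>\<close> and \<open>t\<^sub>0 = t(0)\<close> for the denominator of \<open>\<gamma>\<^sub>r\<close>.
  After taking logarithms the claim reads \<open>r (ln G(\<mu>) - 2 ln g(1/K)) \<le> ln t(\<mu>) - 2 ln t\<^sub>0\<close>.
  The right-hand side is the Kullback--Leibler divergence of \<open>((1-\<mu>)/K, \<mu>/K, \<mu>/K, 1-1/K-\<mu>/K)\<close>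
  from the product of two Bernoulli(1/K) distributions. Since \<open>G(\<mu>)/g(1/K)\<^sup>2\<close> factors as
  \<open>y\<^sub>1\<^bsup>K-2\<^esup> y\<^sub>2\<close> with \<open>y\<^sub>1 = K(K-1-\<mu>)/(K-1)\<^sup>2\<close> and
  \<open>y\<^sub>2 = K(K(1-\<mu>+\<mu>\<^sup>2)-1)/(K-1)\<^sup>2\<close>, the inequality \<open>ln y \<le> y - 1\<close> bounds the left-hand side by \<open>r s\<^sup>2/(K-1)\<^sup>2\<close>.
  Quadratic lower bounds for \<open>x ln x - x + 1\<close> bound the divergence from below by
  \<open>(ln K / K) s\<^sup>2/(K-1)\<^sup>2\<close>, which dominates since \<open>r \<le> ln K / K\<close>.
\<close>

lemma xlnx_excess_ge_le_one:
  fixes x :: real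
  assumes "0 < x" "x \<le> 1"
  shows "(1 - x)^2 / 2 \<le> x * ln x - x + 1"
proof -
  let ?f = "\<lambda>x::real. x * ln x - x + 1 - (1 - x)^2 / 2"
  have "?f 1 \<le> ?f x"
  proof (rule DERIV_nonpos_imp_nonincreasing[OF assms(2)])
    fix y assume "x \<le> y" "y \<le> 1"
    hence "y > 0" using assms by auto
    hence "DERIV ?f y :> ln y + 1 - y" and "ln y + 1 - y \<le> 0"
      using ln_le_minus_one[of y]
      by (auto intro!: derivative_eq_intros simp: power2_eq_square field_simps)
    thus "\<exists>d. DERIV ?f y :> d \<and> d \<le> 0" by blast
  qed
  thus ?thesis by simp
qed

lemma xlnx_excess_ge_ge_one:
  fixes x :: real
  assumes "1 \<le> x"
  shows "(x - 1)^2 / (2 * x) \<le> x * ln x - x + 1"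
proof -
  let ?f = "\<lambda>x::real. x * ln x - x + 1 - (x - 1)^2 / (2 * x)"
  have "?f 1 \<le> ?f x"
  proof (rule DERIV_nonneg_imp_nondecreasing[OF assms])
    fix y assume y: "1 \<le> y" "y \<le> x"
    hence "DERIV ?f y :> ln y - (1 - 1 / y^2) / 2"
      by (auto intro!: derivative_eq_intros simp: power2_eq_square field_simps)
    moreover have "(1 - 1 / y^2) / 2 \<le> 1 - 1 / y"
    proof -
      have "0 \<le> y * (y - 1)^2" using y by simp
      thus ?thesis using y by (simp add: field_simps power2_eq_square algebra_simps)
    qed
    moreover have "1 - 1 / y \<le> ln y"
      using ln_le_minus_one[of "1 / y"] y by (simp add: ln_div)
    ultimately show "\<exists>d. DERIV ?f y :> d \<and> 0 \<le> d" by force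
  qed
  thus ?thesis by simp
qed

lemma xlnx_excess_quotient_antimono:
  fixes t K :: real
  assumes "1 < t" "t \<le> K"
  shows "(K * ln K - K + 1) / (K - 1)^2 \<le> (t * ln t - t + 1) / (t - 1)^2"
proof (rule DERIV_nonpos_imp_nonincreasing[OF assms(2)])
  let ?f = "\<lambda>x::real. (x * ln x - x + 1) / (x - 1)^2"
  fix y assume "t \<le> y" "y \<le> K"
  hence y: "1 < y" using assms by auto
  have "DERIV ?f y :> (ln y * (y - 1)^2 - (y * ln y - y + 1) * (2 * (y - 1))) / ((y - 1)^2)^2"
    using y by (auto intro!: derivative_eq_intros)
  moreover have "ln y * (y - 1)^2 - (y * ln y - y + 1) * (2 * (y - 1))
      = (y - 1) * (2 * (y - 1) - (y + 1) * ln y)"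
    by (simp add: algebra_simps power2_eq_square)
  moreover have "2 * (y - 1) \<le> (y + 1) * ln y"
    \<comment> \<open>the arithmetic--logarithmic mean inequality\<close>
    using ln_inverse_approx_ge[of 1 y] y by (simp add: field_simps)
  hence "(y - 1) * (2 * (y - 1) - (y + 1) * ln y) / ((y - 1)^2)^2 \<le> 0"
    using y by (intro divide_nonpos_nonneg mult_nonneg_nonpos) auto
  ultimately show "\<exists>d. DERIV ?f y :> d \<and> d \<le> 0" by auto
qed

definition relent :: "real \<Rightarrow> real \<Rightarrow> real" where
  "relent p q = (if p = 0 then 0 else p * ln (p / q))"

lemma relent_eq_relent_one:
  assumes "0 \<le> p" "0 < q"
  shows "relent p q = relent p 1 - p * ln q"
  using assms by (auto simp: relent_def ln_div algebra_simps)

lemma ln_pw_self: "0 \<le> p \<Longrightarrow> ln (pw p p) = relent p 1"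
  by (simp add: pw_def relent_def)

lemma ln_pw_double: "0 \<le> p \<Longrightarrow> ln (pw p (2 * p)) = 2 * relent p 1"
  by (simp add: pw_def relent_def)

lemma relent_excess_eq:
  assumes "0 < p" "0 < q"
  shows "relent p q - (p - q) = q * ((p / q) * ln (p / q) - p / q + 1)"
  using assms by (simp add: relent_def field_simps)

lemma relent_excess_ge_below:
  assumes "0 \<le> p" "p \<le> q" "0 < q"
  shows "(p - q)^2 / (2 * q) \<le> relent p q - (p - q)"
proof (cases "p = 0")
  case True
  thus ?thesis using assms by (simp add: relent_def power2_eq_square)
next
  case False
  hence "0 < p" using assms by simp
  have "(p - q)^2 / (2 * q) = q * ((1 - p / q)^2 / 2)"
    using assms by (simp add: field_simps power2_eq_square)
  also have "\<dots> \<le> q * ((p / q) * ln (p / q) - p / q + 1)"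
    using xlnx_excess_ge_le_one[of "p / q"] \<open>0 < p\<close> assms by (intro mult_left_mono) auto
  finally show ?thesis using relent_excess_eq[OF \<open>0 < p\<close> assms(3)] by simp
qed

lemma relent_excess_ge_above:
  assumes "q \<le> p" "0 < q"
  shows "(p - q)^2 / (2 * p) \<le> relent p q - (p - q)"
proof -
  have "0 < p" using assms by simp
  have "(p - q)^2 / (2 * p) = q * ((p / q - 1)^2 / (2 * (p / q)))"
    using assms \<open>0 < p\<close> by (simp add: field_simps power2_eq_square)
  also have "\<dots> \<le> q * ((p / q) * ln (p / q) - p / q + 1)"
    using xlnx_excess_ge_ge_one[of "p / q"] assms by (intro mult_left_mono) auto
  finally show ?thesis using relent_excess_eq[OF \<open>0 < p\<close> assms(2)] by simp
qed

lemma ln_3_le: "ln (3::real) \<le> 7 / 6"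
proof -
  have "(3::real) \<le> (1 + (7 / 6) / real (12::nat)) ^ 12"
    by (simp add: power_def)
  also have "\<dots> \<le> exp (7 / 6)"
    by (rule exp_ge_one_plus_x_over_n_power_n) auto
  finally have "ln 3 \<le> ln (exp (7 / 6 :: real))" by (intro ln_mono) auto
  thus ?thesis by simp
qed

lemma ln_le_half_minus_inverse:
  fixes K :: real
  assumes "3 \<le> K"
  shows "ln K \<le> K / 2 - 1 / K"
proof -
  have "ln K = ln 3 + ln (K / 3)" using assms by (simp add: ln_div)
  also have "\<dots> \<le> 7 / 6 + (K / 3 - 1)"
    using ln_3_le ln_le_minus_one[of "K / 3"] assms by simp
  also have "\<dots> \<le> K / 2 - 1 / K"
  proof -
    have "3 * K \<le> K * K" using assms by (intro mult_right_mono) auto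
    hence "K + 6 \<le> K * K" using assms by linarith
    thus ?thesis using assms by (simp add: field_simps)
  qed
  finally show ?thesis .
qed

text \<open>
  The divergence of \<open>((1-\<mu>)/K, \<mu>/K, \<mu>/K, 1-1/K-\<mu>/K)\<close> from the law
  \<open>(1/K\<^sup>2, (K-1)/K\<^sup>2, (K-1)/K\<^sup>2, (K-1)\<^sup>2/K\<^sup>2)\<close> of two independent Bernoulli(1/K) variables;
  the two equal middle terms are merged into one with factor \<open>2\<close>.
\<close>
definition pair_kl :: "real \<Rightarrow> real \<Rightarrow> real" where
  "pair_kl K \<mu> = relent ((1 - \<mu>) / K) (1 / K^2) + 2 * relent (\<mu> / K) ((K - 1) / K^2)
    + relent (1 - 1 / K - \<mu> / K) ((K - 1)^2 / K^2)"

lemma pair_kl_eq_excess_sum: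
  assumes "K \<noteq> 0"
  shows "pair_kl K \<mu> =
    (relent ((1 - \<mu>) / K) (1 / K^2) - ((1 - \<mu>) / K - 1 / K^2))
    + 2 * (relent (\<mu> / K) ((K - 1) / K^2) - (\<mu> / K - (K - 1) / K^2))
    + (relent (1 - 1 / K - \<mu> / K) ((K - 1)^2 / K^2) - ((1 - 1 / K - \<mu> / K) - (K - 1)^2 / K^2))"
  using assms by (simp add: pair_kl_def field_simps power2_eq_square)

lemma pair_kl_lower_bound_small_mu:
  fixes K \<mu> :: real
  assumes K: "1 < K" and \<mu>: "0 \<le> \<mu>" "K * \<mu> \<le> K - 1"
  shows "ln K * (K - 1 - K * \<mu>)^2 / (K - 1)^2 \<le> K * pair_kl K \<mu>"
proof -
  define s where "s = K - 1 - K * \<mu>"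
  define \<tau> where "\<tau> = s + 1"
  define a b c where "a = (1 - \<mu>) / K" and "b = \<mu> / K" and "c = 1 - 1 / K - \<mu> / K"
  define qa qb qc where "qa = 1 / K^2" and "qb = (K - 1) / K^2" and "qc = (K - 1)^2 / K^2"
  have q: "0 < qa" "0 < qb" "0 < qc" using K by (simp_all add: qa_def qb_def qc_def)
  have excess_sum: "pair_kl K \<mu>
      = (relent a qa - (a - qa)) + 2 * (relent b qb - (b - qb)) + (relent c qc - (c - qc))"
    unfolding a_def b_def c_def qa_def qb_def qc_def using K by (simp add: pair_kl_eq_excess_sum)
  have "0 \<le> s" "1 \<le> \<tau>" "\<tau> \<le> K" using K \<mu> by (simp_all add: s_def \<tau>_def mult_left_le)
  have "a = \<tau> * qa" "b - qb = - s / K^2" "c - qc = s / K^2"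
    using K by (simp_all add: a_def b_def c_def qa_def qb_def qc_def s_def \<tau>_def field_simps
      power2_eq_square)
  moreover have "0 \<le> s / K^2" using \<open>0 \<le> s\<close> by simp
  ultimately have "0 < a" "b \<le> qb" "qc \<le> c"
    using q \<open>1 \<le> \<tau>\<close> by auto
  have "0 \<le> b" using \<mu> K by (simp add: b_def)
  define fK where "fK = K * ln K - K + 1"
  have "fK * s^2 / (K - 1)^2 \<le> \<tau> * ln \<tau> - \<tau> + 1"
  proof (cases "\<tau> = 1")
    case True
    thus ?thesis by (simp add: \<tau>_def)
  next
    case False
    hence "fK / (K - 1)^2 \<le> (\<tau> * ln \<tau> - \<tau> + 1) / (\<tau> - 1)^2"
      using xlnx_excess_quotient_antimono[of \<tau> K] \<open>1 \<le> \<tau>\<close> \<open>\<tau> \<le> K\<close> by (simp add: fK_def)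
    thus ?thesis using False by (simp add: \<tau>_def field_simps)
  qed
  hence "qa * (fK * s^2 / (K - 1)^2) \<le> qa * (\<tau> * ln \<tau> - \<tau> + 1)"
    using q by (intro mult_left_mono) auto
  hence excess_a: "qa * (fK * s^2 / (K - 1)^2) \<le> relent a qa - (a - qa)"
    using relent_excess_eq[OF \<open>0 < a\<close> q(1)] \<open>a = \<tau> * qa\<close> q by simp
  have excess_b: "(s / K^2)^2 / (2 * qb) \<le> relent b qb - (b - qb)"
    using relent_excess_ge_below[OF \<open>0 \<le> b\<close> \<open>b \<le> qb\<close> q(2)] \<open>b - qb = - s / K^2\<close>
    by (simp add: power2_eq_square)
  have excess_c: "0 \<le> relent c qc - (c - qc)"
    using relent_excess_ge_above[OF \<open>qc \<le> c\<close> q(3)] q \<open>qc \<le> c\<close>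
      divide_nonneg_pos[OF zero_le_power2[of "c - qc"], of "2 * c"] by linarith
  have "ln K * s^2 / (K - 1)^2 = K * (qa * (fK * s^2 / (K - 1)^2) + 2 * ((s / K^2)^2 / (2 * qb)))"
    \<comment> \<open>an identity, because \<open>fK + K - 1 = K ln K\<close>\<close>
    using K by (simp add: fK_def qa_def qb_def field_simps; algebra)
  also have "\<dots> \<le> K * pair_kl K \<mu>"
    using excess_a excess_b excess_c excess_sum K by (intro mult_left_mono) auto
  finally show ?thesis by (simp add: s_def)
qed

lemma pair_kl_lower_bound_large_mu:
  fixes K \<mu> :: real
  assumes K: "3 \<le> K" and \<mu>: "K - 1 < K * \<mu>" "\<mu> \<le> 1"
  shows "ln K * (K - 1 - K * \<mu>)^2 / (K - 1)^2 \<le> K * pair_kl K \<mu>"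
proof -
  define s where "s = K - 1 - K * \<mu>"
  define a b c where "a = (1 - \<mu>) / K" and "b = \<mu> / K" and "c = 1 - 1 / K - \<mu> / K"
  define qa qb qc where "qa = 1 / K^2" and "qb = (K - 1) / K^2" and "qc = (K - 1)^2 / K^2"
  have q: "0 < qa" "0 < qb" "0 < qc" using K by (simp_all add: qa_def qb_def qc_def)
  have excess_sum: "pair_kl K \<mu>
      = (relent a qa - (a - qa)) + 2 * (relent b qb - (b - qb)) + (relent c qc - (c - qc))"
    unfolding a_def b_def c_def qa_def qb_def qc_def using K by (simp add: pair_kl_eq_excess_sum)
  have "a - qa = s / K^2" "b - qb = - s / K^2" "c - qc = s / K^2"
    using K by (simp_all add: a_def b_def c_def qa_def qb_def qc_def s_def field_simps
      power2_eq_square)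
  moreover have "s / K^2 < 0" using \<mu> K by (simp add: s_def divide_neg_pos)
  ultimately have "a \<le> qa" "qb \<le> b" "c \<le> qc" by linarith+
  hence "0 < b" using q by linarith
  have "K + K * \<mu> \<le> K * K"
    using K \<mu> mult_left_mono[of \<mu> 1 K] mult_right_mono[of 3 K K] by linarith
  hence "0 \<le> a" "0 \<le> c" "b \<le> 1 / K"
    using K \<mu> by (simp_all add: a_def b_def c_def field_simps)
  have excess_a: "(s / K^2)^2 / (2 * qa) \<le> relent a qa - (a - qa)"
    using relent_excess_ge_below[OF \<open>0 \<le> a\<close> \<open>a \<le> qa\<close> q(1)] \<open>a - qa = s / K^2\<close> by simp
  have "(s / K^2)^2 / (2 * (1 / K)) \<le> (s / K^2)^2 / (2 * b)"
    using \<open>b \<le> 1 / K\<close> \<open>0 < b\<close> K by (intro divide_left_mono) auto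
  also have "\<dots> \<le> relent b qb - (b - qb)"
    using relent_excess_ge_above[OF \<open>qb \<le> b\<close> q(2)] \<open>b - qb = - s / K^2\<close>
    by (simp add: power2_eq_square)
  finally have excess_b: "(s / K^2)^2 / (2 * (1 / K)) \<le> relent b qb - (b - qb)" .
  have excess_c: "(s / K^2)^2 / (2 * qc) \<le> relent c qc - (c - qc)"
    using relent_excess_ge_below[OF \<open>0 \<le> c\<close> \<open>c \<le> qc\<close> q(3)] \<open>c - qc = s / K^2\<close> by simp
  have "ln K * s^2 / (K - 1)^2 \<le> (K / 2 - 1 / K) * s^2 / (K - 1)^2"
    using ln_le_half_minus_inverse[OF K] by (intro divide_right_mono mult_right_mono) auto
  also have "\<dots> \<le> s^2 * (1 / (2 * K) + 1 / K^2 + 1 / (2 * K * (K - 1)^2))"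
  proof -
    have "1 / (2 * K) + 1 / K^2 + 1 / (2 * K * (K - 1)^2) - (K / 2 - 1 / K) / (K - 1)^2
        = 1 / (K^2 * (K - 1)^2)"
      using K by (simp add: field_simps; algebra)
    moreover have "0 \<le> 1 / (K^2 * (K - 1)^2)" by simp
    ultimately have "(K / 2 - 1 / K) / (K - 1)^2 \<le> 1 / (2 * K) + 1 / K^2 + 1 / (2 * K * (K - 1)^2)"
      by linarith
    hence "s^2 * ((K / 2 - 1 / K) / (K - 1)^2)
        \<le> s^2 * (1 / (2 * K) + 1 / K^2 + 1 / (2 * K * (K - 1)^2))"
      by (intro mult_left_mono) auto
    thus ?thesis by (simp add: mult.commute)
  qed
  also have "\<dots> = K * ((s / K^2)^2 / (2 * qa) + 2 * ((s / K^2)^2 / (2 * (1 / K)))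
      + (s / K^2)^2 / (2 * qc))"
    using K by (simp add: qa_def qc_def field_simps; algebra)
  also have "\<dots> \<le> K * pair_kl K \<mu>"
    using excess_a excess_b excess_c excess_sum K by (intro mult_left_mono) auto
  finally show ?thesis by (simp add: s_def)
qed

lemma pair_kl_lower_bound:
  fixes K \<mu> :: real
  assumes "3 \<le> K" "0 \<le> \<mu>" "\<mu> \<le> 1"
  shows "ln K * (K - 1 - K * \<mu>)^2 / (K - 1)^2 \<le> K * pair_kl K \<mu>"
  using pair_kl_lower_bound_small_mu[of K \<mu>] pair_kl_lower_bound_large_mu[of K \<mu>] assms
  by force

lemma gfun_at_inverse:
  assumes "1 \<le> k"
  shows "gfun k (1 / real k) = ((real k - 1) / real k) ^ (k - 1)"
  using assms by (simp add: gfun_def field_simps)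

lemma Gfun_factors_pos:
  fixes K \<mu> :: real
  assumes "3 \<le> K" "0 \<le> \<mu>" "\<mu> \<le> 1"
  shows "0 < K - 1 - \<mu>" "0 < K * (1 - \<mu> + \<mu>^2) - 1"
proof -
  have "3 / 4 \<le> 1 - \<mu> + \<mu>^2"
    using zero_le_power2[of "\<mu> - 1 / 2"] by (simp add: power2_eq_square algebra_simps)
  hence "K * (3 / 4) \<le> K * (1 - \<mu> + \<mu>^2)" using assms by (intro mult_left_mono) auto
  thus "0 < K * (1 - \<mu> + \<mu>^2) - 1" using assms by linarith
  show "0 < K - 1 - \<mu>" using assms by simp
qed

lemma Gfun_eq:
  "Gfun k \<mu> = real k powr (1 - real k) * (real k - 1 - \<mu>) ^ (k - 2)
    * (real k * (1 - \<mu> + \<mu>^2) - 1)"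
  by (simp add: Gfun_def)

lemma Gfun_pos:
  assumes "3 \<le> k" "0 \<le> \<mu>" "\<mu> \<le> 1"
  shows "0 < Gfun k \<mu>"
  using Gfun_factors_pos[of "real k" \<mu>] assms unfolding Gfun_eq
  by (intro mult_pos_pos zero_less_power) auto

lemma ln_Gfun:
  assumes "3 \<le> k" "0 \<le> \<mu>" "\<mu> \<le> 1"
  defines "K \<equiv> real k"
  shows "ln (Gfun k \<mu>) = (1 - K) * ln K + (K - 2) * ln (K - 1 - \<mu>) + ln (K * (1 - \<mu> + \<mu>^2) - 1)"
  using Gfun_factors_pos[of K \<mu>] assms unfolding Gfun_eq
  by (simp add: ln_mult_pos ln_realpow K_def of_nat_diff)

lemma ln_Gfun_minus_ln_gfun_le:
  assumes "3 \<le> k" "0 \<le> \<mu>" "\<mu> \<le> 1"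
  defines "K \<equiv> real k"
  shows "ln (Gfun k \<mu>) - 2 * ln (gfun k (1 / K)) \<le> (K - 1 - K * \<mu>)^2 / (K - 1)^2"
proof -
  define y1 y2 where "y1 = K * (K - 1 - \<mu>) / (K - 1)^2"
    and "y2 = K * (K * (1 - \<mu> + \<mu>^2) - 1) / (K - 1)^2"
  have K: "3 \<le> K" using assms by (simp add: K_def)
  note pos = Gfun_factors_pos[OF K assms(2,3)]
  have "0 < y1" "0 < y2" using K pos by (simp_all add: y1_def y2_def)
  have ln_y: "ln y1 = ln K + ln (K - 1 - \<mu>) - 2 * ln (K - 1)"
    "ln y2 = ln K + ln (K * (1 - \<mu> + \<mu>^2) - 1) - 2 * ln (K - 1)"
    using K pos by (simp_all add: y1_def y2_def ln_div ln_mult_pos ln_realpow)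
  have "ln (Gfun k \<mu>) - 2 * ln (gfun k (1 / K)) = (1 - K) * ln K + (K - 2) * ln (K - 1 - \<mu>)
      + ln (K * (1 - \<mu> + \<mu>^2) - 1) - 2 * ((K - 1) * (ln (K - 1) - ln K))"
    using ln_Gfun[OF assms(1-3)] gfun_at_inverse[of k] assms(1) K
    by (simp add: K_def ln_realpow ln_div of_nat_diff)
  also have "\<dots> = (K - 2) * ln y1 + ln y2"
    unfolding ln_y by (simp add: algebra_simps)
  also have "\<dots> \<le> (K - 2) * (y1 - 1) + (y2 - 1)"
    using ln_le_minus_one[OF \<open>0 < y1\<close>] ln_le_minus_one[OF \<open>0 < y2\<close>] K
    by (intro add_mono mult_left_mono) auto
  also have "\<dots> = (K - 1 - K * \<mu>)^2 / (K - 1)^2"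
    using K by (simp add: y1_def y2_def field_simps; algebra)
  finally show ?thesis .
qed

lemma tfun_bases_nonneg:
  fixes K \<mu> :: real
  assumes "3 \<le> K" "0 \<le> \<mu>" "\<mu> \<le> 1"
  shows "0 \<le> (1 - \<mu>) / K" "0 \<le> \<mu> / K" "0 \<le> 1 - 1 / K - \<mu> / K"
proof -
  have "K + K * \<mu> \<le> K * K"
    using assms mult_left_mono[of \<mu> 1 K] mult_right_mono[of 3 K K] by linarith
  thus "0 \<le> (1 - \<mu>) / K" "0 \<le> \<mu> / K" "0 \<le> 1 - 1 / K - \<mu> / K"
    using assms by (simp_all add: field_simps)
qed

lemma tfun_eq_pw:
  "tfun k \<mu> = pw ((1 - \<mu>) / real k) ((1 - \<mu>) / real k) * pw (\<mu> / real k) (2 * (\<mu> / real k))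
    * pw (1 - 1 / real k - \<mu> / real k) (1 - 1 / real k - \<mu> / real k)"
  by (simp add: tfun_def)

lemma tfun_pos:
  assumes "3 \<le> k" "0 \<le> \<mu>" "\<mu> \<le> 1"
  shows "0 < tfun k \<mu>"
  using tfun_bases_nonneg[of "real k" \<mu>] assms unfolding tfun_eq_pw
  by (auto simp: pw_def)

lemma ln_tfun:
  assumes "3 \<le> k" "0 \<le> \<mu>" "\<mu> \<le> 1"
  defines "K \<equiv> real k"
  shows "ln (tfun k \<mu>) = 2 * ln ((1 / K) powr (1 / K) * (1 - 1 / K) powr (1 - 1 / K)) + pair_kl K \<mu>"
proof -
  have K: "3 \<le> K" using assms by (simp add: K_def)
  define a b c where "a = (1 - \<mu>) / K" and "b = \<mu> / K" and "c = 1 - 1 / K - \<mu> / K"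
  have abc: "0 \<le> a" "0 \<le> b" "0 \<le> c"
    using tfun_bases_nonneg[OF K assms(2,3)] by (simp_all add: a_def b_def c_def)
  have "tfun k \<mu> = pw a a * pw b (2 * b) * pw c c"
    by (simp add: tfun_eq_pw a_def b_def c_def K_def)
  moreover have "0 < pw a a" "0 < pw b (2 * b)" "0 < pw c c"
    using abc by (auto simp: pw_def)
  ultimately have ln_t: "ln (tfun k \<mu>) = relent a 1 + 2 * relent b 1 + relent c 1"
    using abc by (simp add: ln_mult_pos ln_pw_self ln_pw_double)
  have "pair_kl K \<mu> = ln (tfun k \<mu>)
      - (a * ln (1 / K^2) + 2 * (b * ln ((K - 1) / K^2)) + c * ln ((K - 1)^2 / K^2))"
  proof -
    have "pair_kl K \<mu> = relent a (1 / K^2) + 2 * relent b ((K - 1) / K^2)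
        + relent c ((K - 1)^2 / K^2)"
      by (simp add: pair_kl_def a_def b_def c_def)
    thus ?thesis
      using relent_eq_relent_one[OF abc(1), of "1 / K^2"] K ln_t
        relent_eq_relent_one[OF abc(2), of "(K - 1) / K^2"]
        relent_eq_relent_one[OF abc(3), of "(K - 1)^2 / K^2"]
      by simp
  qed
  also have "a * ln (1 / K^2) + 2 * (b * ln ((K - 1) / K^2)) + c * ln ((K - 1)^2 / K^2)
      = 2 * ln ((1 / K) powr (1 / K) * (1 - 1 / K) powr (1 - 1 / K))"
  proof -
    have "1 - 1 / K = (K - 1) / K" using K by (simp add: field_simps)
    hence ln_t0: "ln ((1 / K) powr (1 / K) * (1 - 1 / K) powr (1 - 1 / K))
        = - ln K / K + (1 - 1 / K) * (ln (K - 1) - ln K)"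
      using K by (simp add: ln_mult_pos ln_powr ln_div)
    have ln_q: "ln (1 / K^2) = - 2 * ln K" "ln ((K - 1) / K^2) = ln (K - 1) - 2 * ln K"
      "ln ((K - 1)^2 / K^2) = 2 * ln (K - 1) - 2 * ln K"
      using K by (simp_all add: ln_div ln_realpow)
    have sums: "a + 2 * b + c = 1" "b + c = 1 - 1 / K"
      using K by (simp_all add: a_def b_def c_def field_simps)
    have "a * ln (1 / K^2) + 2 * (b * ln ((K - 1) / K^2)) + c * ln ((K - 1)^2 / K^2)
        = - 2 * ln K * (a + 2 * b + c) + 2 * ln (K - 1) * (b + c)"
      unfolding ln_q by (simp add: algebra_simps)
    also have "\<dots> = 2 * (- ln K / K + (1 - 1 / K) * (ln (K - 1) - ln K))"
      unfolding sums by (simp add: algebra_simps)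
    finally show ?thesis unfolding ln_t0 .
  qed
  finally show ?thesis by simp
qed

theorem mainTheorem4:
  fixes k :: nat and r \<mu> :: real
  assumes "k \<ge> 3" and "0 < r" and "r \<le> ln (real k) / real k"
    and "0 \<le> \<mu>" and "\<mu> \<le> 1"
  shows "Gamma_r k r \<mu> \<le> (gamma_r k r)^2"
proof -
  define K where "K = real k"
  define t0 where "t0 = (1 / K) powr (1 / K) * (1 - 1 / K) powr (1 - 1 / K)"
  define s where "s = K - 1 - K * \<mu>"
  have K: "3 \<le> K" using assms(1) by (simp add: K_def)
  have "r * (ln (Gfun k \<mu>) - 2 * ln (gfun k (1 / K))) \<le> r * (s^2 / (K - 1)^2)"
    using ln_Gfun_minus_ln_gfun_le[OF assms(1,4,5)] assms(2)
    by (intro mult_left_mono) (simp_all add: K_def s_def)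
  also have "\<dots> \<le> ln K / K * (s^2 / (K - 1)^2)"
    using assms(3) by (intro mult_right_mono) (simp_all add: K_def)
  also have "\<dots> = (ln K * s^2 / (K - 1)^2) / K" by simp
  also have "\<dots> \<le> (K * pair_kl K \<mu>) / K"
    using pair_kl_lower_bound[OF K assms(4,5)] K by (intro divide_right_mono) (simp_all add: s_def)
  also have "\<dots> = ln (tfun k \<mu>) - 2 * ln t0"
    using ln_tfun[OF assms(1,4,5)] K by (simp add: K_def t0_def)
  finally have "r * ln (Gfun k \<mu>) - ln (tfun k \<mu>) \<le> 2 * (r * ln (gfun k (1 / K)) - ln t0)"
    by (simp add: algebra_simps)
  moreover have "Gamma_r k r \<mu> = exp (r * ln (Gfun k \<mu>) - ln (tfun k \<mu>))"
    using Gfun_pos[OF assms(1,4,5)] tfun_pos[OF assms(1,4,5)]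
    by (simp add: Gamma_r_def powr_def exp_diff)
  moreover have "gamma_r k r = exp (r * ln (gfun k (1 / K)) - ln t0)"
    using gfun_at_inverse[of k] K assms(1)
    by (simp add: gamma_r_def powr_def exp_diff K_def t0_def)
  ultimately show ?thesis by (simp add: exp_double[symmetric])
qed

end
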